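(* Let $\Sigma^2\subset\mathbb{R}^2$ be open and let $\psi=(x,\phi):\Sigma^2\to\mathbb{R}^2\times\mathbb{R}$ be an indefinite improper affine sphere with Blaschke normal $\xi=(0,0,1)$, where $x:\Sigma^2\to\mathbb{R}^2$, $\phi:\Sigma^2\to\mathbb{R}$; write its conormal map as $\nu=(n,1)$ with $n:\Sigma^2\to\mathbb{R}^2$. Define $\tilde L_\psi:\Sigma^2\to\widetilde{\mathbb{C}}^2$ by $\tilde L_\psi:=x+jn$, and identify $\widetilde{\mathbb{C}}^2$ with $\mathbb{R}^4$ via $(z_1,z_2)=(y_0+jy_1,\,y_2+jy_3)\leftrightarrow(y_0,y_1,y_2,y_3)$. Then \[ \tilde L_\psi^*(dy_0\wedge dy_1+dy_2\wedge dy_3)=0\quad\text{and}\quad \tilde L_\psi^*(dy_0\wedge dy_2+dy_1\wedge dy_3)=0 . \]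
   Context: Para-complex numbers: $\widetilde{\mathbb{C}}=\{a+jb: a,b\in\mathbb{R}\}$ with $j^2=1$. An improper affine sphere is an immersion $\psi$ into affine $3$-space whose Blaschke (affine) normal $\xi$ has vanishing shape operator (hence is constant; here normalized to $\xi=(0,0,1)$); it is indefinite if its affine metric is indefinite. The conormal map $\nu$ is the map into $(\mathbb{R}^3)^*\cong\mathbb{R}^3$ with $\nu(d\psi)=0$ and $\nu(\xi)=1$, so $\nu=(n,1)$ for some $n:\Sigma^2\to\mathbb{R}^2$; the affine metric equals $-\langle dx,dn\rangle$. *)

theory Defs
  imports "HOL-Analysis.Analysis"
begin

type_synonym R2 = "real \<times> real"
type_synonym R3 = "(real \<times> real) \<times> real"

definition e1 :: R2 where "e1 = (1, 0)"
definition e2 :: R2 where "e2 = (0, 1)"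

definition pd :: "(R2 \<Rightarrow> 'b::real_normed_vector) \<Rightarrow> R2 \<Rightarrow> R2 \<Rightarrow> 'b" where
  "pd f p X = frechet_derivative f (at p) X"

definition pd2 :: "(R2 \<Rightarrow> 'b::real_normed_vector) \<Rightarrow> R2 \<Rightarrow> R2 \<Rightarrow> R2 \<Rightarrow> 'b" where
  "pd2 f p X Y = pd (\<lambda>q. pd f q Y) p X"

definition C2_on :: "R2 set \<Rightarrow> (R2 \<Rightarrow> 'b::real_normed_vector) \<Rightarrow> bool" where
  "C2_on S f \<longleftrightarrow>
     (\<forall>p\<in>S. f differentiable (at p)) \<and>
     (\<forall>Y. \<forall>p\<in>S. (\<lambda>q. pd f q Y) differentiable (at p)) \<and>
     (\<forall>X Y. continuous_on S (\<lambda>q. pd2 f q X Y))"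

definition immersion_on :: "R2 set \<Rightarrow> (R2 \<Rightarrow> R3) \<Rightarrow> bool" where
  "immersion_on S \<psi> \<longleftrightarrow> C2_on S \<psi> \<and> (\<forall>p\<in>S. inj (pd \<psi> p))"

definition det3 :: "R3 \<Rightarrow> R3 \<Rightarrow> R3 \<Rightarrow> real" where
  "det3 a b c =
     (let a1 = fst (fst a); a2 = snd (fst a); a3 = snd a;
          b1 = fst (fst b); b2 = snd (fst b); b3 = snd b;
          c1 = fst (fst c); c2 = snd (fst c); c3 = snd c
      in a1 * (b2 * c3 - b3 * c2) - a2 * (b1 * c3 - b3 * c1) + a3 * (b1 * c2 - b2 * c1))"

(* affine fundamental form h induced by a transversal field \<xi>:
   D_X \<psi>_* Y = \<psi>_*(\<nabla>_X Y) + h(X,Y) \<xi> *)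
definition affine_fundamental_form :: "(R2 \<Rightarrow> R3) \<Rightarrow> (R2 \<Rightarrow> R3) \<Rightarrow> R2 \<Rightarrow> R2 \<Rightarrow> R2 \<Rightarrow> real" where
  "affine_fundamental_form \<psi> \<xi> p X Y =
     (THE h. \<exists>T. pd2 \<psi> p X Y = pd \<psi> p T + h *\<^sub>R \<xi> p)"

definition det_h :: "(R2 \<Rightarrow> R3) \<Rightarrow> (R2 \<Rightarrow> R3) \<Rightarrow> R2 \<Rightarrow> real" where
  "det_h \<psi> \<xi> p =
     (let h = affine_fundamental_form \<psi> \<xi> p
      in h e1 e1 * h e2 e2 - h e1 e2 * h e2 e1)"

definition shape_operator :: "(R2 \<Rightarrow> R3) \<Rightarrow> (R2 \<Rightarrow> R3) \<Rightarrow> R2 \<Rightarrow> R2 \<Rightarrow> R2" where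
  "shape_operator \<psi> \<xi> p X = (THE T. pd \<xi> p X = - pd \<psi> p T)"

(* Blaschke (affine) normal: transversal, equiaffine (D\<xi> tangent),
   h nondegenerate and induced volume det(\<psi>_u,\<psi>_v,\<xi>) equals the volume of h (up to sign) *)
definition is_blaschke_normal :: "R2 set \<Rightarrow> (R2 \<Rightarrow> R3) \<Rightarrow> (R2 \<Rightarrow> R3) \<Rightarrow> bool" where
  "is_blaschke_normal S \<psi> \<xi> \<longleftrightarrow>
     (\<forall>p\<in>S. det3 (pd \<psi> p e1) (pd \<psi> p e2) (\<xi> p) \<noteq> 0) \<and>
     (\<forall>p\<in>S. \<xi> differentiable (at p)) \<and>
     (\<forall>p\<in>S. \<forall>X. \<exists>T. pd \<xi> p X = pd \<psi> p T) \<and>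
     (\<forall>p\<in>S. det_h \<psi> \<xi> p \<noteq> 0 \<and>
             (det3 (pd \<psi> p e1) (pd \<psi> p e2) (\<xi> p))\<^sup>2 = \<bar>det_h \<psi> \<xi> p\<bar>)"

definition improper_affine_sphere :: "R2 set \<Rightarrow> (R2 \<Rightarrow> R3) \<Rightarrow> (R2 \<Rightarrow> R3) \<Rightarrow> bool" where
  "improper_affine_sphere S \<psi> \<xi> \<longleftrightarrow>
     immersion_on S \<psi> \<and> is_blaschke_normal S \<psi> \<xi> \<and>
     (\<forall>p\<in>S. \<forall>X. shape_operator \<psi> \<xi> p X = 0)"

definition indefinite_affine_metric :: "R2 set \<Rightarrow> (R2 \<Rightarrow> R3) \<Rightarrow> (R2 \<Rightarrow> R3) \<Rightarrow> bool" where
  "indefinite_affine_metric S \<psi> \<xi> \<longleftrightarrow> (\<forall>p\<in>S. det_h \<psi> \<xi> p < 0)"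

(* conormal map \<nu> (covectors on R^3 identified with R^3 via the standard pairing) *)
definition is_conormal :: "R2 set \<Rightarrow> (R2 \<Rightarrow> R3) \<Rightarrow> (R2 \<Rightarrow> R3) \<Rightarrow> (R2 \<Rightarrow> R3) \<Rightarrow> bool" where
  "is_conormal S \<psi> \<xi> \<nu> \<longleftrightarrow>
     (\<forall>p\<in>S. (\<forall>X. \<nu> p \<bullet> pd \<psi> p X = 0) \<and> \<nu> p \<bullet> \<xi> p = 1)"

(* para-complex numbers a + j b (j^2 = 1) represented as pairs (a, b) *)
type_synonym paracomplex = "real \<times> real"

definition pc :: "real \<Rightarrow> real \<Rightarrow> paracomplex" where
  "pc a b = (a, b)"

definition L_tilde :: "(R2 \<Rightarrow> R2) \<Rightarrow> (R2 \<Rightarrow> R2) \<Rightarrow> R2 \<Rightarrow> paracomplex \<times> paracomplex" where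
  "L_tilde x n p = (pc (fst (x p)) (fst (n p)), pc (snd (x p)) (snd (n p)))"

definition ycoord :: "nat \<Rightarrow> paracomplex \<times> paracomplex \<Rightarrow> real" where
  "ycoord i z = (if i = 0 then fst (fst z) else if i = 1 then snd (fst z)
                 else if i = 2 then fst (snd z) else snd (snd z))"

definition dwedge :: "nat \<Rightarrow> nat \<Rightarrow> paracomplex \<times> paracomplex \<Rightarrow> paracomplex \<times> paracomplex \<Rightarrow> real" where
  "dwedge i k V W = ycoord i V * ycoord k W - ycoord k V * ycoord i W"

definition omega1 where "omega1 V W = dwedge 0 1 V W + dwedge 2 3 V W"
definition omega2 where "omega2 V W = dwedge 0 2 V W + dwedge 1 3 V W"

definition pullback2 ::
  "((paracomplex \<times> paracomplex) \<Rightarrow> (paracomplex \<times> paracomplex) \<Rightarrow> real)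
    \<Rightarrow> (R2 \<Rightarrow> paracomplex \<times> paracomplex) \<Rightarrow> R2 \<Rightarrow> R2 \<Rightarrow> R2 \<Rightarrow> real" where
  "pullback2 \<omega> f p X Y = \<omega> (pd f p X) (pd f p Y)"

end

theory Submission
  imports Defs
begin

(*
  Differentiating the conormal equations n \<bullet> dx + d\<phi> = 0 gives
  dn(X) \<bullet> dx(Y) = -(d\<^sup>2\<phi> + n \<bullet> d\<^sup>2x)(X, Y) = -h(X, Y), so by Schwarz's theorem
  dn(X) \<bullet> dx(Y) is symmetric in X and Y; this is the vanishing of the first pullback.
  The same identity gives det h = det dn \<cdot> det dx, and the Blaschke normalisation
  (det dx)\<^sup>2 = |det h| together with det h < 0 forces det dn = -det dx, which is the
  vanishing of the second pullback.
*)

section \<open>Directional derivatives and Schwarz's theorem\<close>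

lemma pd_eq_frechet_derivative: "pd f p = frechet_derivative f (at p)"
  by (simp add: pd_def fun_eq_iff)

lemma has_derivative_pd: "f differentiable (at p) \<Longrightarrow> (f has_derivative pd f p) (at p)"
  by (simp add: pd_eq_frechet_derivative frechet_derivative_works[symmetric])

lemma pd_eqI: "(f has_derivative D) (at p) \<Longrightarrow> pd f p = D"
  by (simp add: pd_eq_frechet_derivative frechet_derivative_at[symmetric])

lemma linear_pd: "f differentiable (at p) \<Longrightarrow> linear (pd f p)"
  using has_derivative_pd has_derivative_linear by blast

lemma C2_onD:
  "C2_on S f \<Longrightarrow> p \<in> S \<Longrightarrow> f differentiable (at p)"
  "C2_on S f \<Longrightarrow> p \<in> S \<Longrightarrow> (\<lambda>q. pd f q Y) differentiable (at p)"
  "C2_on S f \<Longrightarrow> continuous_on S (\<lambda>q. pd2 f q X Y)"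
  unfolding C2_on_def by blast+

lemma has_derivative_pd2:
  "(\<lambda>q. pd f q Y) differentiable (at p) \<Longrightarrow>
     ((\<lambda>q. pd f q Y) has_derivative (\<lambda>X. pd2 f p X Y)) (at p)"
  using has_derivative_pd[of "\<lambda>q. pd f q Y" p] by (simp add: pd2_def[abs_def])

lemma has_field_derivative_along_line:
  fixes g :: "R2 \<Rightarrow> real"
  assumes "g differentiable (at (a + s *\<^sub>R V))"
  shows "((\<lambda>s. g (a + s *\<^sub>R V)) has_field_derivative pd g (a + s *\<^sub>R V) V) (at s)"
proof -
  have "((\<lambda>s. a + s *\<^sub>R V) has_derivative (\<lambda>h. h *\<^sub>R V)) (at s)"
    by (auto intro!: derivative_eq_intros)
  from has_derivative_compose[OF this has_derivative_pd[OF assms]]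
  have "((\<lambda>s. g (a + s *\<^sub>R V)) has_derivative (\<lambda>h. pd g (a + s *\<^sub>R V) (h *\<^sub>R V))) (at s)"
    by (simp add: o_def)
  moreover have "(\<lambda>h. pd g (a + s *\<^sub>R V) (h *\<^sub>R V)) = (*) (pd g (a + s *\<^sub>R V) V)"
    using linear_scale[OF linear_pd[OF assms]] by (auto simp: fun_eq_iff)
  ultimately show ?thesis by (simp add: has_field_derivative_def)
qed

lemma parallelogram_in_ball:
  fixes p X Y :: R2
  assumes "0 \<le> s" "s \<le> t" "0 \<le> u" "u \<le> t" "t * (norm X + norm Y) < r"
  shows "p + s *\<^sub>R X + u *\<^sub>R Y \<in> ball p r"
proof -
  have "norm (s *\<^sub>R X + u *\<^sub>R Y) \<le> s * norm X + u * norm Y"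
    using norm_triangle_ineq[of "s *\<^sub>R X" "u *\<^sub>R Y"] assms by simp
  also have "\<dots> \<le> t * norm X + t * norm Y"
    using assms by (intro add_mono mult_right_mono) auto
  finally have "norm (s *\<^sub>R X + u *\<^sub>R Y) < r"
    using assms(5) by (simp add: distrib_left)
  moreover have "dist p (p + (s *\<^sub>R X + u *\<^sub>R Y)) = norm (s *\<^sub>R X + u *\<^sub>R Y)"
    by (metis add_diff_cancel_left' dist_commute dist_norm)
  ultimately show ?thesis
    by (simp add: add.assoc)
qed

text \<open>Mean value theorem applied twice, first along \<open>X\<close> and then along \<open>Y\<close>.\<close>
lemma second_difference_eq_pd2:
  fixes g :: "R2 \<Rightarrow> real"
  assumes "C2_on S g" "ball p r \<subseteq> S" "0 < t" "t * (norm X + norm Y) < r"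
  shows "\<exists>q\<in>ball p r. g (p + t *\<^sub>R X + t *\<^sub>R Y) - g (p + t *\<^sub>R X) - g (p + t *\<^sub>R Y) + g p
           = t\<^sup>2 * pd2 g q Y X"
proof -
  have in_S: "p + s *\<^sub>R X + u *\<^sub>R Y \<in> S" if "0 \<le> s" "s \<le> t" "0 \<le> u" "u \<le> t" for s u
    using parallelogram_in_ball[OF that assms(4)] assms(2) by blast
  note g_diff = C2_onD(1)[OF assms(1)] and pd_g_diff = C2_onD(2)[OF assms(1)]
  define k where "k s = g ((p + t *\<^sub>R Y) + s *\<^sub>R X) - g (p + s *\<^sub>R X)" for s
  define k' where "k' s = pd g ((p + t *\<^sub>R Y) + s *\<^sub>R X) X - pd g (p + s *\<^sub>R X) X" for s
  have "DERIV k s :> k' s" if "0 \<le> s" "s \<le> t" for s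
    unfolding k_def k'_def
    using in_S[of s t] in_S[of s 0] that assms(3)
    by (intro DERIV_diff has_field_derivative_along_line g_diff) (auto simp: algebra_simps)
  from MVT2[OF assms(3) this]
  obtain s where s: "0 < s" "s < t" "k t - k 0 = t * k' s"
    by auto
  define m where "m u = pd g ((p + s *\<^sub>R X) + u *\<^sub>R Y) X" for u
  have "DERIV m u :> pd2 g ((p + s *\<^sub>R X) + u *\<^sub>R Y) Y X" if "0 \<le> u" "u \<le> t" for u
    unfolding m_def pd2_def
    using in_S[of s u] that s
    by (intro has_field_derivative_along_line pd_g_diff) auto
  from MVT2[OF assms(3) this]
  obtain u where u: "0 < u" "u < t" "m t - m 0 = t * pd2 g ((p + s *\<^sub>R X) + u *\<^sub>R Y) Y X"
    by auto
  have "g (p + t *\<^sub>R X + t *\<^sub>R Y) - g (p + t *\<^sub>R X) - g (p + t *\<^sub>R Y) + g p = k t - k 0"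
    unfolding k_def by (simp add: algebra_simps)
  also have "\<dots> = t * (m t - m 0)"
    unfolding s(3) k'_def m_def by (simp add: algebra_simps)
  also have "\<dots> = t\<^sup>2 * pd2 g ((p + s *\<^sub>R X) + u *\<^sub>R Y) Y X"
    unfolding u(3) by (simp add: power2_eq_square)
  finally show ?thesis
    using parallelogram_in_ball[of s t u X Y r p] s u assms(4) by auto
qed

lemma mixed_pd2_agree_nearby:
  fixes g :: "R2 \<Rightarrow> real"
  assumes "C2_on S g" "open S" "p \<in> S" "0 < \<epsilon>"
  shows "\<exists>q1\<in>ball p \<epsilon>. \<exists>q2\<in>ball p \<epsilon>. pd2 g q1 Y X = pd2 g q2 X Y"
proof -
  obtain r0 where r0: "r0 > 0" "ball p r0 \<subseteq> S"
    using assms(2,3) open_contains_ball by blast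
  define r where "r = min r0 \<epsilon>"
  define t where "t = r / (2 * (norm X + norm Y + 1))"
  have r: "r > 0" "ball p r \<subseteq> S" "ball p r \<subseteq> ball p \<epsilon>"
    using r0 assms(4) by (auto simp: r_def)
  have "norm X + norm Y + 1 > 0"
    by (simp add: add_nonneg_pos)
  then have "t > 0" "t * (norm X + norm Y + 1) = r / 2"
    using r(1) by (simp_all add: t_def field_simps)
  then have t: "t > 0" "t * (norm X + norm Y) < r" "t * (norm Y + norm X) < r"
    using r(1) by (simp_all add: distrib_left add.commute)
  obtain q1 where q1: "q1 \<in> ball p r"
    "g (p + t *\<^sub>R X + t *\<^sub>R Y) - g (p + t *\<^sub>R X) - g (p + t *\<^sub>R Y) + g p = t\<^sup>2 * pd2 g q1 Y X"
    using second_difference_eq_pd2[OF assms(1) r(2) t(1,2)] by blast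
  obtain q2 where q2: "q2 \<in> ball p r"
    "g (p + t *\<^sub>R Y + t *\<^sub>R X) - g (p + t *\<^sub>R Y) - g (p + t *\<^sub>R X) + g p = t\<^sup>2 * pd2 g q2 X Y"
    using second_difference_eq_pd2[OF assms(1) r(2) t(1,3)] by blast
  have "t\<^sup>2 * pd2 g q1 Y X = t\<^sup>2 * pd2 g q2 X Y"
    using q1(2) q2(2) by (simp add: algebra_simps)
  then have "pd2 g q1 Y X = pd2 g q2 X Y"
    using t(1) by simp
  then show ?thesis
    using q1(1) q2(1) r(3) by blast
qed

lemma pd2_commute_real:
  fixes g :: "R2 \<Rightarrow> real"
  assumes "C2_on S g" "open S" "p \<in> S"
  shows "pd2 g p X Y = pd2 g p Y X"
proof (rule ccontr)
  let ?A = "pd2 g p Y X" and ?B = "pd2 g p X Y"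
  assume "?B \<noteq> ?A"
  define e where "e = \<bar>?A - ?B\<bar> / 2"
  have "e > 0" using \<open>?B \<noteq> ?A\<close> by (simp add: e_def)
  have "isCont (\<lambda>q. pd2 g q Y X) p" "isCont (\<lambda>q. pd2 g q X Y) p"
    using C2_onD(3)[OF assms(1)] assms(2,3) continuous_on_eq_continuous_at by blast+
  then have "\<exists>d>0. \<forall>q. dist q p < d \<longrightarrow> \<bar>pd2 g q Y X - ?A\<bar> < e"
    "\<exists>d>0. \<forall>q. dist q p < d \<longrightarrow> \<bar>pd2 g q X Y - ?B\<bar> < e"
    using \<open>e > 0\<close> unfolding continuous_at_eps_delta dist_real_def by blast+
  then obtain dA dB where
    dA: "dA > 0" "\<And>q. dist q p < dA \<Longrightarrow> \<bar>pd2 g q Y X - ?A\<bar> < e" and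
    dB: "dB > 0" "\<And>q. dist q p < dB \<Longrightarrow> \<bar>pd2 g q X Y - ?B\<bar> < e"
    by blast
  have min_pos: "0 < min dA dB"
    using dA(1) dB(1) by simp
  obtain q1 q2 where q: "q1 \<in> ball p (min dA dB)" "q2 \<in> ball p (min dA dB)"
    and eq: "pd2 g q1 Y X = pd2 g q2 X Y"
    using mixed_pd2_agree_nearby[OF assms min_pos] by blast
  have "\<bar>pd2 g q1 Y X - ?A\<bar> < e" "\<bar>pd2 g q2 X Y - ?B\<bar> < e"
    using q dA(2) dB(2) by (simp_all add: dist_commute)
  then show False
    using eq unfolding e_def by (simp add: abs_if split: if_splits)
qed

lemma differentiable_bounded_linear_compose:
  "bounded_linear L \<Longrightarrow> f differentiable F \<Longrightarrow> (\<lambda>q. L (f q)) differentiable F"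
  unfolding differentiable_def using bounded_linear.has_derivative by blast

lemma pd_bounded_linear_compose:
  assumes "bounded_linear L" "f differentiable (at p)"
  shows "pd (\<lambda>q. L (f q)) p Y = L (pd f p Y)"
proof -
  have "((\<lambda>q. L (f q)) has_derivative (\<lambda>Y. L (pd f p Y))) (at p)"
    by (rule bounded_linear.has_derivative[OF assms(1) has_derivative_pd[OF assms(2)]])
  then show ?thesis
    by (simp add: pd_eqI)
qed

lemma has_derivative_pd_bounded_linear_compose:
  assumes "bounded_linear L" "C2_on S f" "open S" "p \<in> S"
  shows "((\<lambda>q. pd (\<lambda>q. L (f q)) q Y) has_derivative (\<lambda>X. L (pd2 f p X Y))) (at p)"
proof -
  have "((\<lambda>q. L (pd f q Y)) has_derivative (\<lambda>X. L (pd2 f p X Y))) (at p)"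
    by (rule bounded_linear.has_derivative[OF assms(1) has_derivative_pd2[OF C2_onD(2)[OF assms(2,4)]]])
  then show ?thesis
    by (rule has_derivative_transform_within_open[OF _ assms(3,4)])
      (simp add: pd_bounded_linear_compose[OF assms(1) C2_onD(1)[OF assms(2)]])
qed

lemma pd2_bounded_linear_compose:
  assumes "bounded_linear L" "C2_on S f" "open S" "p \<in> S"
  shows "pd2 (\<lambda>q. L (f q)) p X Y = L (pd2 f p X Y)"
  using pd_eqI[OF has_derivative_pd_bounded_linear_compose[OF assms]] by (simp add: pd2_def)

lemma C2_on_bounded_linear_compose:
  assumes "bounded_linear L" "C2_on S f" "open S"
  shows "C2_on S (\<lambda>q. L (f q))"
  unfolding C2_on_def
proof (intro conjI allI ballI)
  fix p assume "p \<in> S"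
  show "(\<lambda>q. L (f q)) differentiable (at p)"
    by (rule differentiable_bounded_linear_compose[OF assms(1) C2_onD(1)[OF assms(2) \<open>p \<in> S\<close>]])
next
  fix Y p assume "p \<in> S"
  show "(\<lambda>q. pd (\<lambda>q. L (f q)) q Y) differentiable (at p)"
    using has_derivative_pd_bounded_linear_compose[OF assms \<open>p \<in> S\<close>]
    unfolding differentiable_def by blast
next
  fix X Y
  have "continuous_on S (\<lambda>q. L (pd2 f q X Y))"
    by (rule continuous_on_compose2[OF linear_continuous_on[OF assms(1)] C2_onD(3)[OF assms(2)]])
      auto
  then show "continuous_on S (\<lambda>q. pd2 (\<lambda>q. L (f q)) q X Y)"
    by (rule continuous_on_cong[THEN iffD1, rotated 2])
      (simp_all add: pd2_bounded_linear_compose[OF assms])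
qed

lemma pd2_commute:
  fixes f :: "R2 \<Rightarrow> 'b::euclidean_space"
  assumes "C2_on S f" "open S" "p \<in> S"
  shows "pd2 f p X Y = pd2 f p Y X"
proof (rule euclidean_eqI)
  fix b :: 'b
  have L: "bounded_linear (\<lambda>v. v \<bullet> b)"
    by (rule bounded_linear_inner_left)
  show "pd2 f p X Y \<bullet> b = pd2 f p Y X \<bullet> b"
    using pd2_commute_real[OF C2_on_bounded_linear_compose[OF L assms(1,2)] assms(2,3)]
    by (simp add: pd2_bounded_linear_compose[OF L assms])
qed

lemma pd_Pair:
  "f differentiable (at p) \<Longrightarrow> g differentiable (at p) \<Longrightarrow>
     pd (\<lambda>q. (f q, g q)) p Y = (pd f p Y, pd g p Y)"
  by (simp add: pd_eqI[OF has_derivative_Pair[OF has_derivative_pd has_derivative_pd]])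

lemma C2_on_PairD:
  assumes "C2_on S (\<lambda>q. (f q, g q))" "open S"
  shows "C2_on S f" "C2_on S g"
  using C2_on_bounded_linear_compose[OF bounded_linear_fst assms]
    C2_on_bounded_linear_compose[OF bounded_linear_snd assms]
  by simp_all

lemma pd2_Pair:
  assumes "C2_on S f" "C2_on S g" "open S" "p \<in> S"
  shows "pd2 (\<lambda>q. (f q, g q)) p X Y = (pd2 f p X Y, pd2 g p X Y)"
proof -
  have "((\<lambda>q. (pd f q Y, pd g q Y)) has_derivative (\<lambda>X. (pd2 f p X Y, pd2 g p X Y))) (at p)"
    using assms by (intro has_derivative_Pair has_derivative_pd2 C2_onD(2))
  then have "((\<lambda>q. pd (\<lambda>q. (f q, g q)) q Y) has_derivative (\<lambda>X. (pd2 f p X Y, pd2 g p X Y))) (at p)"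
    by (rule has_derivative_transform_within_open[OF _ assms(3,4)])
      (simp add: pd_Pair C2_onD(1)[OF assms(1)] C2_onD(1)[OF assms(2)])
  then show ?thesis
    by (simp add: pd2_def pd_eqI)
qed

section \<open>Linear algebra in the plane\<close>

definition det2 :: "R2 \<Rightarrow> R2 \<Rightarrow> real" where
  "det2 a b = fst a * snd b - snd a * fst b"

definition jac_det :: "(R2 \<Rightarrow> R2) \<Rightarrow> R2 \<Rightarrow> real" where
  "jac_det f p = det2 (pd f p e1) (pd f p e2)"

lemma linear_R2_expansion:
  assumes "linear f"
  shows "f T = fst T *\<^sub>R f e1 + snd T *\<^sub>R f e2"
proof -
  have "f T = f (fst T *\<^sub>R e1 + snd T *\<^sub>R e2)"
    by (simp add: e1_def e2_def)
  then show ?thesis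
    by (simp add: linear_add[OF assms] linear_scale[OF assms])
qed

text \<open>Cramer's rule.\<close>
lemma inner_system_solution:
  assumes "det2 a b \<noteq> 0" "v \<bullet> a = c" "v \<bullet> b = d"
  shows "v = ((c * snd b - d * snd a) / det2 a b, (fst a * d - fst b * c) / det2 a b)"
proof -
  have "fst v * det2 a b = c * snd b - d * snd a" "snd v * det2 a b = fst a * d - fst b * c"
    unfolding assms(2,3)[symmetric] by (simp_all add: det2_def inner_prod_def algebra_simps)
  then show ?thesis
    using assms(1) by (simp add: prod_eq_iff field_simps)
qed

lemma linear_R2_surj:
  assumes "linear f" "det2 (f e1) (f e2) \<noteq> 0"
  shows "surj f"
proof (rule surjI)
  fix V :: R2
  let ?a = "f e1" and ?b = "f e2" and ?D = "det2 (f e1) (f e2)"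
  define s t where "s = fst V * snd ?b - snd V * fst ?b" and "t = fst ?a * snd V - snd ?a * fst V"
  have "s * fst ?a + t * fst ?b = fst V * ?D" "s * snd ?a + t * snd ?b = snd V * ?D"
    unfolding s_def t_def det2_def by (simp_all add: algebra_simps)
  then show "f (s / ?D, t / ?D) = V"
    using assms(2) by (simp add: linear_R2_expansion[OF assms(1), of "(s / ?D, t / ?D)"]
        prod_eq_iff add_divide_distrib[symmetric])
qed

lemma binet_cauchy_det2:
  "(u \<bullet> a) * (v \<bullet> b) - (u \<bullet> b) * (v \<bullet> a) = det2 u v * det2 a b"
  by (simp add: det2_def inner_prod_def algebra_simps)

section \<open>Pullbacks along \<open>L_tilde\<close>\<close>

lemma pd_L_tilde:
  assumes "x differentiable (at p)" "n differentiable (at p)"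
  shows "pd (L_tilde x n) p Z =
           ((fst (pd x p Z), fst (pd n p Z)), (snd (pd x p Z), snd (pd n p Z)))"
proof -
  have "L_tilde x n = (\<lambda>q. ((fst (x q), fst (n q)), (snd (x q), snd (n q))))"
    by (simp add: L_tilde_def pc_def fun_eq_iff)
  moreover have "((\<lambda>q. ((fst (x q), fst (n q)), (snd (x q), snd (n q)))) has_derivative
      (\<lambda>Z. ((fst (pd x p Z), fst (pd n p Z)), (snd (pd x p Z), snd (pd n p Z))))) (at p)"
    by (intro has_derivative_Pair has_derivative_fst has_derivative_snd has_derivative_pd assms)
  ultimately show ?thesis
    by (simp add: pd_eqI)
qed

lemma pullback_omega1_L_tilde:
  assumes "x differentiable (at p)" "n differentiable (at p)"
  shows "pullback2 omega1 (L_tilde x n) p X Y = pd n p Y \<bullet> pd x p X - pd n p X \<bullet> pd x p Y"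
  by (simp add: pullback2_def omega1_def dwedge_def ycoord_def pd_L_tilde[OF assms]
      inner_prod_def algebra_simps)

lemma pullback_omega2_L_tilde:
  assumes "x differentiable (at p)" "n differentiable (at p)"
  shows "pullback2 omega2 (L_tilde x n) p X Y = det2 X Y * (jac_det x p + jac_det n p)"
  using linear_R2_expansion[OF linear_pd[OF assms(1)], of X]
    linear_R2_expansion[OF linear_pd[OF assms(1)], of Y]
    linear_R2_expansion[OF linear_pd[OF assms(2)], of X]
    linear_R2_expansion[OF linear_pd[OF assms(2)], of Y]
  by (simp add: pullback2_def omega2_def dwedge_def ycoord_def pd_L_tilde[OF assms]
      jac_det_def det2_def algebra_simps)

section \<open>Graphs with a conormal\<close>

lemma det3_vertical: "det3 (a, s) (b, t) ((0, 0), 1) = det2 a b"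
  by (simp add: det3_def det2_def)

context
  fixes S :: "R2 set" and x n :: "R2 \<Rightarrow> R2" and \<phi> :: "R2 \<Rightarrow> real"
  assumes open_S: "open S"
    and C2_x: "C2_on S x" and C2_\<phi>: "C2_on S \<phi>"
    and jac_det_x: "\<And>q. q \<in> S \<Longrightarrow> jac_det x q \<noteq> 0"
    and conormal: "\<And>q X. q \<in> S \<Longrightarrow> n q \<bullet> pd x q X + pd \<phi> q X = 0"
begin

text \<open>On \<open>S\<close> the conormal is given by Cramer's rule in terms of first derivatives of \<open>x\<close>
  and \<open>\<phi>\<close>, which are differentiable.\<close>
lemma conormal_differentiable:
  assumes "p \<in> S"
  shows "n differentiable (at p)"
proof -
  define F where "F q = (let a = pd x q e1; b = pd x q e2; c = - pd \<phi> q e1; d = - pd \<phi> q e2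
    in ((c * snd b - d * snd a) / det2 a b, (fst a * d - fst b * c) / det2 a b))" for q
  have "n q = F q" if "q \<in> S" for q
    unfolding F_def Let_def
    by (rule inner_system_solution)
      (use jac_det_x conormal that in \<open>auto simp: jac_det_def eq_neg_iff_add_eq_0\<close>)
  moreover have "(\<lambda>q. fst (pd x q Z)) differentiable (at p)" "(\<lambda>q. snd (pd x q Z)) differentiable (at p)"
    "(\<lambda>q. pd \<phi> q Z) differentiable (at p)" for Z
    using differentiable_bounded_linear_compose[OF bounded_linear_fst C2_onD(2)[OF C2_x assms]]
      differentiable_bounded_linear_compose[OF bounded_linear_snd C2_onD(2)[OF C2_x assms]]
      C2_onD(2)[OF C2_\<phi> assms]
    by simp_all
  then have "F differentiable (at p)"
    unfolding F_def Let_def det2_def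
    using jac_det_x[OF assms] unfolding jac_det_def det2_def
    by (intro derivative_intros) auto
  ultimately show ?thesis
    unfolding differentiable_def
    using has_derivative_transform_within_open[OF _ open_S assms] by metis
qed

lemma conormal_derivative:
  assumes "p \<in> S"
  shows "pd n p X \<bullet> pd x p Y + n p \<bullet> pd2 x p X Y + pd2 \<phi> p X Y = 0"
proof -
  let ?G = "\<lambda>q. n q \<bullet> pd x q Y + pd \<phi> q Y"
  have "(?G has_derivative (\<lambda>X. (n p \<bullet> pd2 x p X Y + pd n p X \<bullet> pd x p Y) + pd2 \<phi> p X Y)) (at p)"
    using assms conormal_differentiable
    by (intro has_derivative_add has_derivative_inner has_derivative_pd has_derivative_pd2
        C2_onD(2)[OF C2_x] C2_onD(2)[OF C2_\<phi>])
  moreover have "(?G has_derivative (\<lambda>X. 0)) (at p)"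
    by (rule has_derivative_transform_within_open[OF _ open_S assms, of "\<lambda>q. 0"])
      (simp_all add: conormal)
  ultimately have "(\<lambda>X. (n p \<bullet> pd2 x p X Y + pd n p X \<bullet> pd x p Y) + pd2 \<phi> p X Y) = (\<lambda>X. 0)"
    by (rule has_derivative_unique)
  then show ?thesis
    by (metis add.commute add.left_commute)
qed

lemma pd_conormal_inner_pd_symmetric:
  assumes "p \<in> S"
  shows "pd n p X \<bullet> pd x p Y = pd n p Y \<bullet> pd x p X"
  using conormal_derivative[OF assms, of X Y] conormal_derivative[OF assms, of Y X]
    pd2_commute[OF C2_x open_S assms, of X Y] pd2_commute[OF C2_\<phi> open_S assms, of X Y]
  by (smt (verit))

lemma affine_fundamental_form_graph:
  assumes "p \<in> S"
  shows "affine_fundamental_form (\<lambda>q. (x q, \<phi> q)) (\<lambda>q. ((0, 0), 1)) p X Y = - (pd n p X \<bullet> pd x p Y)"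
  unfolding affine_fundamental_form_def
proof (rule the_equality)
  have pd_graph: "pd (\<lambda>q. (x q, \<phi> q)) p T = (pd x p T, pd \<phi> p T)" for T
    by (intro pd_Pair C2_onD(1)[OF C2_x assms] C2_onD(1)[OF C2_\<phi> assms])
  have pd2_graph: "pd2 (\<lambda>q. (x q, \<phi> q)) p X Y = (pd2 x p X Y, pd2 \<phi> p X Y)"
    by (rule pd2_Pair[OF C2_x C2_\<phi> open_S assms])
  obtain T where T: "pd x p T = pd2 x p X Y"
    using linear_R2_surj[OF linear_pd[OF C2_onD(1)[OF C2_x assms]]] jac_det_x[OF assms]
    unfolding jac_det_def by (metis surjD)
  show "\<exists>T. pd2 (\<lambda>q. (x q, \<phi> q)) p X Y
           = pd (\<lambda>q. (x q, \<phi> q)) p T + (- (pd n p X \<bullet> pd x p Y)) *\<^sub>R ((0, 0), 1)"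
    using conormal[OF assms, of T] conormal_derivative[OF assms, of X Y] T
    by (intro exI[of _ T]) (simp add: pd_graph pd2_graph prod_eq_iff)
  fix h
  assume "\<exists>T. pd2 (\<lambda>q. (x q, \<phi> q)) p X Y = pd (\<lambda>q. (x q, \<phi> q)) p T + h *\<^sub>R ((0, 0), 1)"
  then obtain T where
    "pd2 (\<lambda>q. (x q, \<phi> q)) p X Y = pd (\<lambda>q. (x q, \<phi> q)) p T + h *\<^sub>R ((0, 0), 1)"
    by blast
  then have "pd2 x p X Y = pd x p T" "pd2 \<phi> p X Y = pd \<phi> p T + h"
    by (simp_all add: pd_graph pd2_graph prod_eq_iff)
  then show "h = - (pd n p X \<bullet> pd x p Y)"
    using conormal[OF assms, of T] conormal_derivative[OF assms, of X Y] by simp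
qed

lemma det_h_graph:
  assumes "p \<in> S"
  shows "det_h (\<lambda>q. (x q, \<phi> q)) (\<lambda>q. ((0, 0), 1)) p = jac_det n p * jac_det x p"
  using binet_cauchy_det2[of "pd n p e1" "pd x p e1" "pd n p e2" "pd x p e2"]
  by (simp add: det_h_def affine_fundamental_form_graph[OF assms] jac_det_def)

text \<open>The Blaschke normalisation reads \<open>(jac_det x)\<^sup>2 = \<bar>jac_det n * jac_det x\<bar>\<close>; for an
  indefinite metric the product is negative.\<close>
lemma jac_det_conormal_eq_neg:
  assumes "p \<in> S"
    and "(det3 (pd (\<lambda>q. (x q, \<phi> q)) p e1) (pd (\<lambda>q. (x q, \<phi> q)) p e2) ((0, 0), 1))\<^sup>2
           = \<bar>det_h (\<lambda>q. (x q, \<phi> q)) (\<lambda>q. ((0, 0), 1)) p\<bar>"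
    and "det_h (\<lambda>q. (x q, \<phi> q)) (\<lambda>q. ((0, 0), 1)) p < 0"
  shows "jac_det n p = - jac_det x p"
proof -
  have "det3 (pd (\<lambda>q. (x q, \<phi> q)) p e1) (pd (\<lambda>q. (x q, \<phi> q)) p e2) ((0, 0), 1) = jac_det x p"
    by (simp add: pd_Pair C2_onD(1)[OF C2_x assms(1)] C2_onD(1)[OF C2_\<phi> assms(1)]
        det3_vertical jac_det_def)
  then have "jac_det x p * (jac_det x p + jac_det n p) = 0"
    using assms(2,3) by (simp add: det_h_graph[OF assms(1)] power2_eq_square algebra_simps)
  then show ?thesis
    using jac_det_x[OF assms(1)] by simp
qed

end

lemma improper_affine_sphere_graph_conormalD:
  assumes "open S"
    and "improper_affine_sphere S (\<lambda>p. (x p, \<phi> p)) (\<lambda>p. ((0, 0), 1))"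
    and "is_conormal S (\<lambda>p. (x p, \<phi> p)) (\<lambda>p. ((0, 0), 1)) (\<lambda>p. (n p, 1))"
  shows "C2_on S x" "C2_on S \<phi>" "\<And>q. q \<in> S \<Longrightarrow> jac_det x q \<noteq> 0"
    "\<And>q X. q \<in> S \<Longrightarrow> n q \<bullet> pd x q X + pd \<phi> q X = 0"
proof -
  show C2: "C2_on S x" "C2_on S \<phi>"
    using C2_on_PairD[OF _ assms(1)] assms(2)
    unfolding improper_affine_sphere_def immersion_on_def by blast+
  have pd_graph: "pd (\<lambda>p. (x p, \<phi> p)) q X = (pd x q X, pd \<phi> q X)" if "q \<in> S" for q X
    using that by (simp add: pd_Pair C2_onD(1)[OF C2(1)] C2_onD(1)[OF C2(2)])
  show "jac_det x q \<noteq> 0" if "q \<in> S" for q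
    using assms(2) that unfolding improper_affine_sphere_def is_blaschke_normal_def
    by (simp add: pd_graph det3_vertical jac_det_def)
  fix q X
  assume "q \<in> S"
  then have "(n q, 1) \<bullet> pd (\<lambda>p. (x p, \<phi> p)) q X = 0"
    using assms(3) unfolding is_conormal_def by blast
  then show "n q \<bullet> pd x q X + pd \<phi> q X = 0"
    by (simp add: pd_graph[OF \<open>q \<in> S\<close>] inner_prod_def)
qed

theorem mainTheorem2:
  fixes S :: "(real \<times> real) set"
    and x n :: "real \<times> real \<Rightarrow> real \<times> real"
    and \<phi> :: "real \<times> real \<Rightarrow> real"
  assumes "open S"
    and "improper_affine_sphere S (\<lambda>p. (x p, \<phi> p)) (\<lambda>p. ((0, 0), 1))"
    and "indefinite_affine_metric S (\<lambda>p. (x p, \<phi> p)) (\<lambda>p. ((0, 0), 1))"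
    and "is_conormal S (\<lambda>p. (x p, \<phi> p)) (\<lambda>p. ((0, 0), 1)) (\<lambda>p. (n p, 1))"
  shows "(\<forall>p\<in>S. \<forall>X Y. pullback2 omega1 (L_tilde x n) p X Y = 0) \<and>
         (\<forall>p\<in>S. \<forall>X Y. pullback2 omega2 (L_tilde x n) p X Y = 0)"
proof -
  note graph = assms(1) improper_affine_sphere_graph_conormalD[OF assms(1,2,4)]
  have blaschke: "is_blaschke_normal S (\<lambda>p. (x p, \<phi> p)) (\<lambda>p. ((0, 0), 1))"
    using assms(2) unfolding improper_affine_sphere_def by blast
  have "pullback2 omega1 (L_tilde x n) p X Y = 0" "pullback2 omega2 (L_tilde x n) p X Y = 0"
    if "p \<in> S" for p X Y
  proof -
    have x_diff: "x differentiable (at p)" and n_diff: "n differentiable (at p)"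
      using C2_onD(1)[OF graph(2) that] conormal_differentiable[OF graph that] .
    show "pullback2 omega1 (L_tilde x n) p X Y = 0"
      using pullback_omega1_L_tilde[OF x_diff n_diff] pd_conormal_inner_pd_symmetric[OF graph that]
      by simp
    show "pullback2 omega2 (L_tilde x n) p X Y = 0"
      using pullback_omega2_L_tilde[OF x_diff n_diff] jac_det_conormal_eq_neg[OF graph that]
        that assms(3) blaschke
      unfolding indefinite_affine_metric_def is_blaschke_normal_def by simp
  qed
  then show ?thesis
    by blast
qed

end
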